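(* (i) For every $r\ge 2$ there exist jointly distributed binary random variables $V_1,\dots,V_r$ for which $R^{s.c.}_{SW} > R_{SW}$ (for instance $V_1=V_2=\dots=V_r$ with $H(V_1)>0$, for which $R_{SW}=H(V_1)/r$ while $R^{s.c.}_{SW}=H(V_1)$). (ii) For every joint distribution $p(v_1,\dots,v_r)$ of binary random variables, $$R^{s.c.}_{SW}\le \min\Big(r\,R_{SW},\ \max_{1\le i\le r} H(V_i)\Big).$$
   Context: Let $V_1,\dots,V_r$ be jointly distributed binary random variables with joint law $p(v_1,\dots,v_r)$, and for each $n$ let $(V_1[t],\dots,V_r[t])$, $t=1,\dots,n$, be i.i.d. copies; write $V_i^n$ for the column vector $(V_i[1],\dots,V_i[n])^t\in\mathbb{F}_2^n$. A rate $R\ge 0$ is achievable with a common compression matrix if for every $\epsilon>0$ and all sufficiently large $n$ there exist a single binary matrix $B$ of size $\lceil nR\rceil\times n$ and a decoding map $g$ such that $\Pr\big[g(BV_1^n,\dots,BV_r^n)\neq (V_1^n,\dots,V_r^n)\big]\le\epsilon$, where the products $BV_i^n$ are computed over $\mathbb{F}_2$. $R^{s.c.}_{SW}$ denotes the infimum of all rates achievable with a common compression matrix. $R_{SW}$ denotes the minimum $R$ such that the symmetric rate tuple $(R,\dots,R)$ lies in the Slepian–Wolf region of $(V_1,\dots,V_r)$, i.e. the minimum $R$ with $|S|\,R\ge H(V_S\mid V_{S^c})$ for every nonempty $S\subseteq\{1,\dots,r\}$ (here $V_S=(V_i)_{i\in S}$). $H(\cdot)$ denotes Shannon entropy in bits.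 *)

theory Defs
  imports Complex_Main "HOL-Library.Z2"
begin

text \<open>Binary random variables V_0..V_(r-1) take values in the field F2 = bit.
  A joint outcome is a tuple v :: nat => bit, extensional (0 at indices >= r).\<close>

type_synonym tuple = "nat \<Rightarrow> bit"

definition tuples :: "nat \<Rightarrow> tuple set" where
  "tuples r = {v. \<forall>i. r \<le> i \<longrightarrow> v i = 0}"

definition is_joint_dist :: "nat \<Rightarrow> (tuple \<Rightarrow> real) \<Rightarrow> bool" where
  "is_joint_dist r p \<longleftrightarrow> (\<forall>v. 0 \<le> p v) \<and> (\<forall>v. v \<notin> tuples r \<longrightarrow> p v = 0)
     \<and> (\<Sum>v\<in>tuples r. p v) = 1"

definition restr :: "nat set \<Rightarrow> tuple \<Rightarrow> tuple" where
  "restr S v = (\<lambda>i. if i \<in> S then v i else 0)"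

definition marg :: "nat \<Rightarrow> (tuple \<Rightarrow> real) \<Rightarrow> nat set \<Rightarrow> tuple \<Rightarrow> real" where
  "marg r p S u = (\<Sum>v\<in>{v\<in>tuples r. restr S v = u}. p v)"

definition entropy :: "nat \<Rightarrow> (tuple \<Rightarrow> real) \<Rightarrow> nat set \<Rightarrow> real" where
  "entropy r p S = - (\<Sum>u\<in>restr S ` tuples r.
      (if marg r p S u = 0 then 0 else marg r p S u * log 2 (marg r p S u)))"

definition cond_entropy :: "nat \<Rightarrow> (tuple \<Rightarrow> real) \<Rightarrow> nat set \<Rightarrow> real" where
  "cond_entropy r p S = - (\<Sum>v\<in>tuples r.
      (if p v = 0 then 0
       else p v * log 2 (p v / marg r p ({..<r} - S) (restr ({..<r} - S) v))))"

definition R_SW :: "nat \<Rightarrow> (tuple \<Rightarrow> real) \<Rightarrow> real" where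
  "R_SW r p = Inf {R. \<forall>S. S \<subseteq> {..<r} \<and> S \<noteq> {} \<longrightarrow>
                         cond_entropy r p S \<le> real (card S) * R}"

text \<open>Blocks of n i.i.d. samples: x t is the t-th sample (t < n).\<close>
definition blocks :: "nat \<Rightarrow> nat \<Rightarrow> (nat \<Rightarrow> tuple) set" where
  "blocks r n = {x. (\<forall>t<n. x t \<in> tuples r) \<and> (\<forall>t. n \<le> t \<longrightarrow> x t = (\<lambda>_. 0))}"

definition block_prob :: "(tuple \<Rightarrow> real) \<Rightarrow> nat \<Rightarrow> (nat \<Rightarrow> tuple) \<Rightarrow> real" where
  "block_prob p n x = (\<Prod>t<n. p (x t))"

text \<open>Encoding with a common m x n matrix B over F2: for each source i < r,
  the vector B V_i^n, where V_i^n = (x 0 i, ..., x (n-1) i).\<close>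
definition encode :: "nat \<Rightarrow> nat \<Rightarrow> nat \<Rightarrow> (nat \<Rightarrow> nat \<Rightarrow> bit) \<Rightarrow> (nat \<Rightarrow> tuple)
    \<Rightarrow> (nat \<Rightarrow> nat \<Rightarrow> bit)" where
  "encode r m n B x = (\<lambda>i k. if i < r \<and> k < m then (\<Sum>j<n. B k j * x j i) else 0)"

definition err_prob :: "nat \<Rightarrow> (tuple \<Rightarrow> real) \<Rightarrow> nat \<Rightarrow> nat \<Rightarrow> (nat \<Rightarrow> nat \<Rightarrow> bit)
    \<Rightarrow> ((nat \<Rightarrow> nat \<Rightarrow> bit) \<Rightarrow> (nat \<Rightarrow> tuple)) \<Rightarrow> real" where
  "err_prob r p m n B g =
     (\<Sum>x\<in>blocks r n. if g (encode r m n B x) \<noteq> x then block_prob p n x else 0)"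

definition achievable_sc :: "nat \<Rightarrow> (tuple \<Rightarrow> real) \<Rightarrow> real \<Rightarrow> bool" where
  "achievable_sc r p R \<longleftrightarrow> 0 \<le> R \<and>
     (\<forall>\<epsilon>>0. \<exists>N. \<forall>n\<ge>N. \<exists>B g. err_prob r p (nat \<lceil>real n * R\<rceil>) n B g \<le> \<epsilon>)"

definition R_SW_sc :: "nat \<Rightarrow> (tuple \<Rightarrow> real) \<Rightarrow> real" where
  "R_SW_sc r p = Inf {R. achievable_sc r p R}"

end

theory Submission
  imports Defs "HOL-Library.FuncSet"
begin

text \<open>
  Everything is a finite sum over binary tuples; both coding theorems are
  proved by the exponent (Chernoff/Gallager) method with Z(u) = \<Sum> p(v)^u, which has
  Z(1) = 1 and Z'(1) = -H ln 2 (H the joint entropy).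

  Achievability: for a uniformly random common m x n matrix two distinct blocks collide
  with probability 2^-m, so ML decoding fails on average with probability at most
  2^(-tm) Z(1-t)^n; this is < 1 exponentially for some t whenever the rate exceeds H.
  Decoding each source on its own with the same matrix gives rates above max H(V_i).
  Since r R_SW \<ge> H, this proves part (ii).

  Converse: for identical sources a decoder is correct on at most 2^m blocks, whose total
  probability tends to 0 below H (Chernoff bound with Z(1+t)).  With the direct
  computation R_SW = H/r this gives part (i), the witness being r copies of a fair coin.
\<close>

lemma tuples_subset_indicators: "tuples r \<subseteq> (\<lambda>S i. if i \<in> S then 1 else 0) ` Pow {..<r}"
proof
  fix v assume v: "v \<in> tuples r"
  have "v = (\<lambda>i. if i \<in> {i. i < r \<and> v i = 1} then 1 else 0)"
  proof
    fix i show "v i = (if i \<in> {i. i < r \<and> v i = 1} then 1 else 0)"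
      using v by (cases "v i"; cases "i < r") (auto simp: tuples_def)
  qed
  then show "v \<in> (\<lambda>S i. if i \<in> S then 1 else 0) ` Pow {..<r}" by blast
qed

lemma finite_tuples [simp]: "finite (tuples r)"
  by (rule finite_subset[OF tuples_subset_indicators]) auto

lemma card_tuples_le: "card (tuples r) \<le> 2 ^ r"
proof -
  have "card (tuples r) \<le> card ((\<lambda>S i. if i \<in> S then (1::bit) else 0) ` Pow {..<r})"
    by (rule card_mono[OF _ tuples_subset_indicators]) auto
  also have "\<dots> \<le> card (Pow {..<r})" by (rule card_image_le) auto
  finally show ?thesis by (simp add: card_Pow)
qed

lemma zero_in_tuples [simp]: "(\<lambda>_. 0) \<in> tuples r"
  by (simp add: tuples_def)

text \<open>Note that
  binary m x n matrices are exactly the elements of blocks n m (m rows of length n).\<close>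

definition pad_block :: "nat \<Rightarrow> (nat \<Rightarrow> tuple) \<Rightarrow> nat \<Rightarrow> tuple" where
  "pad_block n g = (\<lambda>t. if t < n then g t else (\<lambda>_. 0))"

lemma blocks_restricted_eq_image:
  assumes "\<And>t. t < n \<Longrightarrow> A t \<subseteq> tuples r"
  shows "{x \<in> blocks r n. \<forall>t<n. x t \<in> A t} = pad_block n ` PiE {..<n} A"
proof
  show "{x \<in> blocks r n. \<forall>t<n. x t \<in> A t} \<subseteq> pad_block n ` PiE {..<n} A"
  proof
    fix x assume x: "x \<in> {x \<in> blocks r n. \<forall>t<n. x t \<in> A t}"
    have "x = pad_block n (restrict x {..<n})"
      using x by (auto simp: pad_block_def blocks_def fun_eq_iff)
    moreover have "restrict x {..<n} \<in> PiE {..<n} A" using x by auto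
    ultimately show "x \<in> pad_block n ` PiE {..<n} A" by blast
  qed
  show "pad_block n ` PiE {..<n} A \<subseteq> {x \<in> blocks r n. \<forall>t<n. x t \<in> A t}"
    using assms by (fastforce simp: pad_block_def blocks_def PiE_iff)
qed

lemma inj_on_pad_block: "inj_on (pad_block n) (PiE {..<n} A)"
proof (rule inj_onI)
  fix f g assume f: "f \<in> PiE {..<n} A" and g: "g \<in> PiE {..<n} A"
    and eq: "pad_block n f = pad_block n g"
  show "f = g"
  proof
    fix t show "f t = g t"
      using fun_cong[OF eq, of t] f g
      by (cases "t < n") (auto simp: pad_block_def PiE_iff extensional_def)
  qed
qed

lemma sum_blocks_prod:
  assumes "\<And>t. t < n \<Longrightarrow> A t \<subseteq> tuples r"
  shows "(\<Sum>x\<in>{x \<in> blocks r n. \<forall>t<n. x t \<in> A t}. \<Prod>t<n. f t (x t))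
       = (\<Prod>t<n. \<Sum>v\<in>A t. (f t v :: real))"
proof -
  have fin: "\<And>t. t \<in> {..<n} \<Longrightarrow> finite (A t)"
    using assms by (meson finite_subset finite_tuples lessThan_iff)
  have "(\<Prod>t<n. \<Sum>v\<in>A t. f t v) = (\<Sum>g\<in>PiE {..<n} A. \<Prod>t<n. f t (g t))"
    by (rule prod_sum_PiE) (use fin in auto)
  also have "\<dots> = (\<Sum>g\<in>PiE {..<n} A. \<Prod>t<n. f t (pad_block n g t))"
    by (intro sum.cong prod.cong) (auto simp: pad_block_def)
  also have "\<dots> = (\<Sum>x\<in>pad_block n ` PiE {..<n} A. \<Prod>t<n. f t (x t))"
    by (rule sum.reindex[OF inj_on_pad_block, symmetric, unfolded comp_def])
  finally show ?thesis using blocks_restricted_eq_image[OF assms] by simp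
qed

lemma blocks_unrestricted: "{x \<in> blocks r n. \<forall>t<n. x t \<in> tuples r} = blocks r n"
  by (auto simp: blocks_def)

lemma finite_blocks [simp]: "finite (blocks r n)"
proof -
  have "blocks r n = pad_block n ` PiE {..<n} (\<lambda>_. tuples r)"
    using blocks_restricted_eq_image[of n "\<lambda>_. tuples r" r] blocks_unrestricted by simp
  then show ?thesis by (simp add: finite_PiE)
qed

lemma sum_blocks_power:
  "(\<Sum>x\<in>blocks r n. \<Prod>t<n. f (x t)) = (\<Sum>v\<in>tuples r. (f v :: real)) ^ n"
  using sum_blocks_prod[of n "\<lambda>_. tuples r" r "\<lambda>_. f"] blocks_unrestricted by simp

lemma zero_in_blocks [simp]: "(\<lambda>_ _. 0) \<in> blocks r n"
  by (simp add: blocks_def)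

lemma blocks_nonempty [simp]: "blocks r n \<noteq> {}"
  using zero_in_blocks by blast

section \<open>Counting binary matrices with a given kernel vector\<close>

definition dot :: "nat \<Rightarrow> tuple \<Rightarrow> tuple \<Rightarrow> bit" where
  "dot n b c = (\<Sum>j<n. b j * c j)"

lemma dot_flip_coordinate:
  assumes "j0 < n" and "c j0 = 1"
  shows "dot n (b(j0 := b j0 + 1)) c = dot n b c + 1"
proof -
  have "dot n (b(j0 := b j0 + 1)) c = (\<Sum>j<n. b j * c j + (if j = j0 then c j else 0))"
    unfolding dot_def by (intro sum.cong) (auto simp: distrib_right)
  also have "\<dots> = dot n b c + c j0"
    unfolding dot_def sum.distrib using assms(1) by simp
  finally show ?thesis using assms(2) by simp
qed

lemma card_orthogonal:
  assumes j0: "j0 < n" and c: "c j0 = 1"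
  shows "card (tuples n) = 2 * card {b \<in> tuples n. dot n b c = 0}"
proof -
  let ?Z = "{b \<in> tuples n. dot n b c = 0}"
  let ?O = "{b \<in> tuples n. dot n b c = 1}"
  let ?flip = "\<lambda>b. b(j0 := b j0 + 1)"
  have flip_flip: "?flip (?flip b) = b" for b :: tuple
    by (intro ext) simp
  have flip_tuples: "?flip b \<in> tuples n" if "b \<in> tuples n" for b
    using that j0 by (auto simp: tuples_def)
  have "?flip ` ?Z = ?O"
  proof (intro equalityI subsetI)
    fix y assume "y \<in> ?flip ` ?Z"
    then obtain b where "b \<in> ?Z" and "y = ?flip b" by blast
    then show "y \<in> ?O"
      using dot_flip_coordinate[of j0 n c b, OF j0 c] flip_tuples by simp
  next
    fix b assume "b \<in> ?O"
    then have "?flip b \<in> ?Z" using dot_flip_coordinate[of j0 n c b, OF j0 c] flip_tuples by simp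
    then show "b \<in> ?flip ` ?Z" by (rule image_eqI[where x = "?flip b", rotated]) (simp add: fun_eq_iff)
  qed
  moreover have "inj_on ?flip ?Z" by (rule inj_on_inverseI[where g = ?flip]) (rule flip_flip)
  ultimately have "card ?O = card ?Z" using card_image by fastforce
  moreover have "tuples n = ?Z \<union> ?O" and "?Z \<inter> ?O = {}" by auto
  ultimately show ?thesis using card_Un_disjoint[of ?Z ?O] by simp
qed

lemma card_annihilating_matrices:
  assumes j0: "j0 < n" and c: "c j0 = 1"
  shows "real (card {B \<in> blocks n m. \<forall>k<m. dot n (B k) c = 0}) * 2 ^ m
       = real (card (blocks n m))"
proof -
  let ?Z = "{b \<in> tuples n. dot n b c = 0}"
  have "{B \<in> blocks n m. \<forall>k<m. dot n (B k) c = 0} = {B \<in> blocks n m. \<forall>k<m. B k \<in> ?Z}"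
    unfolding blocks_def by blast
  then have "real (card {B \<in> blocks n m. \<forall>k<m. dot n (B k) c = 0})
           = (\<Sum>B\<in>{B \<in> blocks n m. \<forall>k<m. B k \<in> ?Z}. \<Prod>k<m. (1::real))"
    by simp
  also have "\<dots> = real (card ?Z) ^ m"
    by (subst sum_blocks_prod) auto
  finally have kernel: "real (card {B \<in> blocks n m. \<forall>k<m. dot n (B k) c = 0}) = real (card ?Z) ^ m" .
  have "real (card (blocks n m)) = (\<Sum>B\<in>blocks n m. \<Prod>k<m. (1::real))" by simp
  also have "\<dots> = (2 * real (card ?Z)) ^ m"
    by (subst sum_blocks_power) (simp add: card_orthogonal[of j0 n c, OF j0 c])
  finally show ?thesis using kernel by (simp add: power_mult_distrib)
qed

lemma block_prob_nonneg: "is_joint_dist r p \<Longrightarrow> 0 \<le> block_prob p n x"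
  unfolding block_prob_def is_joint_dist_def by (auto intro: prod_nonneg)

lemma sum_block_prob: "is_joint_dist r p \<Longrightarrow> (\<Sum>x\<in>blocks r n. block_prob p n x) = 1"
  unfolding block_prob_def using sum_blocks_power[where f = p and r = r and n = n]
  by (simp add: is_joint_dist_def)

lemma sum_block_prob_powr:
  "(\<Sum>x\<in>blocks r n. block_prob p n x powr s) = (\<Sum>v\<in>tuples r. p v powr s) ^ n"
proof -
  have "(\<Sum>x\<in>blocks r n. block_prob p n x powr s) = (\<Sum>x\<in>blocks r n. \<Prod>t<n. p (x t) powr s)"
    unfolding block_prob_def by (intro sum.cong refl prod_powr_distrib)
  also have "\<dots> = (\<Sum>v\<in>tuples r. p v powr s) ^ n" by (rule sum_blocks_power)
  finally show ?thesis .
qed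

lemma block_prob_nonzero_factor: "block_prob p n x \<noteq> 0 \<Longrightarrow> t < n \<Longrightarrow> p (x t) \<noteq> 0"
  unfolding block_prob_def by (metis finite_lessThan lessThan_iff prod_zero_iff)

lemma prob_le_1: "is_joint_dist r p \<Longrightarrow> p v \<le> 1"
proof -
  assume jd: "is_joint_dist r p"
  show "p v \<le> 1"
  proof (cases "v \<in> tuples r")
    case True
    have "p v \<le> (\<Sum>v\<in>tuples r. p v)"
      using jd True by (intro member_le_sum) (auto simp: is_joint_dist_def)
    then show ?thesis using jd by (simp add: is_joint_dist_def)
  next
    case False then show ?thesis using jd by (simp add: is_joint_dist_def)
  qed
qed

section \<open>The power sum Z(u) and its derivative at u = 1\<close>

definition power_sum :: "nat \<Rightarrow> (tuple \<Rightarrow> real) \<Rightarrow> real \<Rightarrow> real" where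
  "power_sum r p u = (\<Sum>v\<in>tuples r. p v powr u)"

definition joint_entropy :: "nat \<Rightarrow> (tuple \<Rightarrow> real) \<Rightarrow> real" where
  "joint_entropy r p = - (\<Sum>v\<in>tuples r. if p v = 0 then 0 else p v * log 2 (p v))"

lemma power_sum_nonneg: "0 \<le> power_sum r p u"
  unfolding power_sum_def by (intro sum_nonneg) simp

lemma power_sum_one: "is_joint_dist r p \<Longrightarrow> power_sum r p 1 = 1"
  unfolding power_sum_def is_joint_dist_def by simp

lemma joint_entropy_nonneg:
  assumes jd: "is_joint_dist r p"
  shows "0 \<le> joint_entropy r p"
proof -
  have "(if p v = 0 then 0 else p v * log 2 (p v)) \<le> 0" for v
  proof (cases "p v = 0")
    case False
    then have "0 < p v" using jd by (auto simp: is_joint_dist_def order_le_less)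
    moreover have "log 2 (p v) \<le> 0" using \<open>0 < p v\<close> prob_le_1[OF jd, of v] by simp
    ultimately show ?thesis by (simp add: mult_nonneg_nonpos)
  qed simp
  then show ?thesis unfolding joint_entropy_def by (simp add: sum_nonpos)
qed

lemma power_sum_derivative:
  assumes jd: "is_joint_dist r p"
  shows "(power_sum r p has_real_derivative - (joint_entropy r p * ln 2)) (at 1)"
proof -
  have eq: "power_sum r p = (\<lambda>u. \<Sum>v\<in>tuples r. if p v = 0 then 0 else exp (u * ln (p v)))"
    by (simp add: power_sum_def powr_def fun_eq_iff)
  have "(power_sum r p has_real_derivative
          (\<Sum>v\<in>tuples r. if p v = 0 then 0 else p v * ln (p v))) (at 1)"
    unfolding eq
  proof (rule DERIV_sum)
    fix v
    show "((\<lambda>u. if p v = 0 then 0 else exp (u * ln (p v))) has_real_derivative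
          (if p v = 0 then 0 else p v * ln (p v))) (at 1)"
    proof (cases "p v = 0")
      case False
      then have "0 < p v" using jd by (auto simp: is_joint_dist_def order_le_less)
      have "((\<lambda>u. exp (u * ln (p v))) has_real_derivative exp (1 * ln (p v)) * (1 * ln (p v))) (at 1)"
        by (rule DERIV_chain2[OF DERIV_exp], rule DERIV_cmult_right, rule DERIV_ident)
      then show ?thesis using False \<open>0 < p v\<close> by simp
    qed simp
  qed
  moreover have "(\<Sum>v\<in>tuples r. if p v = 0 then 0 else p v * ln (p v)) = - (joint_entropy r p * ln 2)"
  proof -
    have "(\<Sum>v\<in>tuples r. if p v = 0 then 0 else p v * log 2 (p v)) * ln 2
        = (\<Sum>v\<in>tuples r. (if p v = 0 then 0 else p v * log 2 (p v)) * ln 2)"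
      by (rule sum_distrib_right)
    also have "\<dots> = (\<Sum>v\<in>tuples r. if p v = 0 then 0 else p v * ln (p v))"
      by (intro sum.cong) (auto simp: log_def)
    finally show ?thesis unfolding joint_entropy_def by simp
  qed
  ultimately show ?thesis by simp
qed

lemma below_secant_right:
  assumes der: "(f has_real_derivative D) (at x)" and Dc: "D < c"
  shows "\<exists>t. 0 < t \<and> t < 1 \<and> f (x + t) < f x + t * c"
proof -
  from der have lim: "((\<lambda>y. (f y - f x) / (y - x)) \<longlongrightarrow> D) (at x)"
    by (simp add: has_field_derivative_iff)
  have "eventually (\<lambda>y. (f y - f x) / (y - x) < c) (at x)"
    using order_tendstoD(2)[OF lim Dc] .
  then obtain d where d: "d > 0"
    and dd: "\<And>y. y \<noteq> x \<Longrightarrow> dist y x < d \<Longrightarrow> (f y - f x) / (y - x) < c"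
    unfolding eventually_at by auto
  define t where "t = min (d/2) (1/2)"
  have t: "0 < t" "t < 1" "t < d" using d by (auto simp: t_def)
  have "(f (x + t) - f x) / (x + t - x) < c"
    using t by (intro dd) (auto simp: dist_real_def)
  then have "f (x + t) - f x < c * t" using t by (simp add: pos_divide_less_eq)
  then show ?thesis using t by (intro exI[of _ t]) (auto simp: mult.commute)
qed

lemma below_secant_left:
  assumes der: "(f has_real_derivative D) (at x)" and Dc: "- c < D"
  shows "\<exists>t. 0 < t \<and> t < 1 \<and> f (x - t) < f x + t * c"
proof -
  from der have lim: "((\<lambda>y. (f y - f x) / (y - x)) \<longlongrightarrow> D) (at x)"
    by (simp add: has_field_derivative_iff)
  have "eventually (\<lambda>y. - c < (f y - f x) / (y - x)) (at x)"
    using order_tendstoD(1)[OF lim Dc] .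
  then obtain d where d: "d > 0"
    and dd: "\<And>y. y \<noteq> x \<Longrightarrow> dist y x < d \<Longrightarrow> - c < (f y - f x) / (y - x)"
    unfolding eventually_at by auto
  define t where "t = min (d/2) (1/2)"
  have t: "0 < t" "t < 1" "t < d" using d by (auto simp: t_def)
  have "- c < (f (x - t) - f x) / (x - t - x)"
    using t by (intro dd) (auto simp: dist_real_def)
  then have "f (x - t) - f x < c * t" using t by (simp add: pos_divide_less_eq)
  then show ?thesis using t by (intro exI[of _ t]) (auto simp: mult.commute)
qed

text \<open>The two exponent choices: above the entropy Z(1-t) 2^(-tR) < 1 for some t, and
  below it Z(1+t) 2^(tR) < 1 for some t.  Both use 1 + y \<le> e^y.\<close>

lemma achievability_exponent:
  assumes jd: "is_joint_dist r p" and R: "joint_entropy r p < R"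
  shows "\<exists>t. 0 < t \<and> t < 1 \<and> power_sum r p (1 - t) * 2 powr (- t * R) < 1"
proof -
  obtain t where t: "0 < t" "t < 1"
    and below: "power_sum r p (1 - t) < power_sum r p 1 + t * (R * ln 2)"
    using below_secant_left[OF power_sum_derivative[OF jd], of "R * ln 2"] R by auto
  have "power_sum r p (1 - t) < 1 + t * R * ln 2"
    using below power_sum_one[OF jd] by (simp add: mult_ac)
  also have "\<dots> \<le> exp (t * R * ln 2)" by (rule exp_ge_add_one_self)
  also have "\<dots> = 2 powr (t * R)" by (simp add: powr_def mult_ac)
  finally have "power_sum r p (1 - t) * 2 powr (- t * R) < 2 powr (t * R) * 2 powr (- t * R)"
    by (intro mult_strict_right_mono) auto
  also have "\<dots> = 1" by (simp add: powr_add[symmetric])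
  finally show ?thesis using t by blast
qed

lemma converse_exponent:
  assumes jd: "is_joint_dist r p" and R: "R < joint_entropy r p"
  shows "\<exists>t. 0 < t \<and> t < 1 \<and> power_sum r p (1 + t) * 2 powr (t * R) < 1"
proof -
  obtain t where t: "0 < t" "t < 1"
    and below: "power_sum r p (1 + t) < power_sum r p 1 + t * (- (R * ln 2))"
    using below_secant_right[OF power_sum_derivative[OF jd], of "- (R * ln 2)"] R by auto
  have "power_sum r p (1 + t) < 1 + (- t * R * ln 2)"
    using below power_sum_one[OF jd] by (simp add: mult_ac)
  also have "\<dots> \<le> exp (- t * R * ln 2)" by (rule exp_ge_add_one_self)
  also have "\<dots> = 2 powr (- t * R)" by (simp add: powr_def mult_ac)
  finally have "power_sum r p (1 + t) * 2 powr (t * R) < 2 powr (- t * R) * 2 powr (t * R)"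
    by (intro mult_strict_right_mono) auto
  also have "\<dots> = 1" by (simp add: powr_add[symmetric])
  finally show ?thesis using t by blast
qed

section \<open>Random binning with a common matrix: achievability\<close>

definition ml_decoder :: "nat \<Rightarrow> (tuple \<Rightarrow> real) \<Rightarrow> nat \<Rightarrow> nat \<Rightarrow> (nat \<Rightarrow> nat \<Rightarrow> bit)
    \<Rightarrow> (nat \<Rightarrow> nat \<Rightarrow> bit) \<Rightarrow> (nat \<Rightarrow> tuple)" where
  "ml_decoder r p m n B y = (SOME x. x \<in> blocks r n \<and> encode r m n B x = y \<and>
      (\<forall>x'\<in>blocks r n. encode r m n B x' = y \<longrightarrow> block_prob p n x' \<le> block_prob p n x))"

lemma ml_decoder_spec:
  assumes x: "x \<in> blocks r n"
  shows "ml_decoder r p m n B (encode r m n B x) \<in> blocks r n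
    \<and> encode r m n B (ml_decoder r p m n B (encode r m n B x)) = encode r m n B x
    \<and> block_prob p n x \<le> block_prob p n (ml_decoder r p m n B (encode r m n B x))"
proof -
  let ?C = "{x' \<in> blocks r n. encode r m n B x' = encode r m n B x}"
  have "Max (block_prob p n ` ?C) \<in> block_prob p n ` ?C"
    using x by (intro Max_in) auto
  then obtain w where w: "w \<in> ?C" and wM: "block_prob p n w = Max (block_prob p n ` ?C)" by auto
  then have "\<exists>z. z \<in> blocks r n \<and> encode r m n B z = encode r m n B x \<and>
      (\<forall>x'\<in>blocks r n. encode r m n B x' = encode r m n B x \<longrightarrow> block_prob p n x' \<le> block_prob p n z)"
    by (intro exI[of _ w]) auto
  from someI_ex[OF this] show ?thesis
    using x unfolding ml_decoder_def by blast
qed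

lemma blocks_differ:
  assumes "x \<in> blocks r n" and "x' \<in> blocks r n" and "x' \<noteq> x"
  shows "\<exists>t<n. \<exists>i<r. x' t i \<noteq> x t i"
proof -
  obtain t i where d: "x' t i \<noteq> x t i" using assms(3) by (meson ext)
  have "t < n"
  proof (rule ccontr)
    assume "\<not> t < n" then show False using assms(1,2) d by (auto simp: blocks_def)
  qed
  moreover have "i < r"
  proof (rule ccontr)
    assume "\<not> i < r" then show False
      using assms(1,2) d \<open>t < n\<close> by (auto simp: blocks_def tuples_def)
  qed
  ultimately show ?thesis using d by blast
qed

text \<open>Two distinct blocks collide under at most a fraction 2^-m of all matrices: they
  differ in some source i, and B must annihilate the difference of those columns.\<close>

lemma card_colliding_matrices:
  assumes x: "x \<in> blocks r n" and x': "x' \<in> blocks r n" and ne: "x' \<noteq> x"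
  shows "real (card {B \<in> blocks n m. encode r m n B x' = encode r m n B x}) * 2 ^ m
       \<le> real (card (blocks n m))"
proof -
  obtain t i where t: "t < n" and i: "i < r" and d: "x' t i \<noteq> x t i"
    using blocks_differ[OF x x' ne] by blast
  define c where "c = (\<lambda>j. x' j i + x j i)"
  have c1: "c t = 1" unfolding c_def using d by (cases "x' t i"; cases "x t i") auto
  have "{B \<in> blocks n m. encode r m n B x' = encode r m n B x}
      \<subseteq> {B \<in> blocks n m. \<forall>k<m. dot n (B k) c = 0}"
  proof (safe)
    fix B k assume "B \<in> blocks n m" and e: "encode r m n B x' = encode r m n B x" and k: "k < m"
    have "(\<Sum>j<n. B k j * x' j i) = (\<Sum>j<n. B k j * x j i)"
      using fun_cong[OF fun_cong[OF e, of i], of k] i k by (simp add: encode_def)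
    then show "dot n (B k) c = 0"
      unfolding dot_def c_def distrib_left sum.distrib by simp
  qed
  then have "card {B \<in> blocks n m. encode r m n B x' = encode r m n B x}
           \<le> card {B \<in> blocks n m. \<forall>k<m. dot n (B k) c = 0}"
    by (intro card_mono) simp_all
  then have "real (card {B \<in> blocks n m. encode r m n B x' = encode r m n B x}) * 2 ^ m
           \<le> real (card {B \<in> blocks n m. \<forall>k<m. dot n (B k) c = 0}) * 2 ^ m"
    by simp
  also have "\<dots> = real (card (blocks n m))" by (rule card_annihilating_matrices[of t n c m, OF t c1])
  finally show ?thesis .
qed

text \<open>The Gallager trick: a minimum is bounded by any weighted geometric mean.\<close>

lemma min_le_geometric_mean:
  fixes a b t :: real
  assumes a: "0 < a" and b: "0 < b" and t: "0 \<le> t" "t \<le> 1"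
  shows "min a b \<le> a powr (1 - t) * b powr t"
proof (cases "a \<le> b")
  case True
  have "a = a powr (1 - t) * a powr t" using a by (simp add: powr_add[symmetric])
  also have "\<dots> \<le> a powr (1 - t) * b powr t"
    using True a t by (intro mult_left_mono powr_mono2) auto
  finally show ?thesis using True by simp
next
  case False
  have "b = b powr (1 - t) * b powr t" using b by (simp add: powr_add[symmetric])
  also have "\<dots> \<le> a powr (1 - t) * b powr t"
    using False b t by (intro mult_right_mono powr_mono2) auto
  finally show ?thesis using False by simp
qed

lemma card_more_likely_blocks:
  assumes jd: "is_joint_dist r q"
  shows "real (card {x' \<in> blocks r n. x' \<noteq> x \<and> block_prob q n x \<le> block_prob q n x'})
           * block_prob q n x \<le> 1"
proof -
  let ?W = "{x' \<in> blocks r n. x' \<noteq> x \<and> block_prob q n x \<le> block_prob q n x'}"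
  have "real (card ?W) * block_prob q n x = (\<Sum>x'\<in>?W. block_prob q n x)" by simp
  also have "\<dots> \<le> (\<Sum>x'\<in>?W. block_prob q n x')" by (intro sum_mono) auto
  also have "\<dots> \<le> (\<Sum>x'\<in>blocks r n. block_prob q n x')"
    by (intro sum_mono2) (auto intro: block_prob_nonneg[OF jd])
  finally show ?thesis using sum_block_prob[OF jd] by simp
qed

text \<open>The ML decoder can fail on x only if some other block at least as likely as x
  collides with it; each such block collides for a fraction 2^-m of the matrices.\<close>

lemma card_ml_failures_collisions:
  assumes x: "x \<in> blocks r n"
  shows "real (card {B \<in> blocks n m. ml_decoder r q m n B (encode r m n B x) \<noteq> x}) * 2 ^ m
    \<le> real (card {x' \<in> blocks r n. x' \<noteq> x \<and> block_prob q n x \<le> block_prob q n x'})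
        * real (card (blocks n m))"
proof -
  let ?F = "{B \<in> blocks n m. ml_decoder r q m n B (encode r m n B x) \<noteq> x}"
  let ?W = "{x' \<in> blocks r n. x' \<noteq> x \<and> block_prob q n x \<le> block_prob q n x'}"
  let ?Coll = "\<lambda>x'. {B \<in> blocks n m. encode r m n B x' = encode r m n B x}"
  have "?F \<subseteq> (\<Union>x'\<in>?W. ?Coll x')"
  proof
    fix B assume "B \<in> ?F"
    then show "B \<in> (\<Union>x'\<in>?W. ?Coll x')" using ml_decoder_spec[OF x, of q m B] by auto
  qed
  then have "card ?F \<le> card (\<Union>x'\<in>?W. ?Coll x')" by (rule card_mono[rotated]) simp
  also have "\<dots> \<le> (\<Sum>x'\<in>?W. card (?Coll x'))" by (rule card_UN_le) simp
  finally have "real (card ?F) * 2 ^ m \<le> (\<Sum>x'\<in>?W. real (card (?Coll x'))) * 2 ^ m"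
    by (intro mult_right_mono) (simp_all flip: of_nat_sum)
  also have "\<dots> = (\<Sum>x'\<in>?W. real (card (?Coll x')) * 2 ^ m)"
    by (rule sum_distrib_right)
  also have "\<dots> \<le> (\<Sum>x'\<in>?W. real (card (blocks n m)))"
    by (intro sum_mono card_colliding_matrices[OF x]) auto
  finally show ?thesis by simp
qed

text \<open>Combining the two counts, the fraction of matrices on which ML decoding of x fails
  is at most min(1, 2^-m / P(x)); the geometric mean interpolates between the bounds.\<close>

lemma card_ml_failures:
  assumes jd: "is_joint_dist r q" and x: "x \<in> blocks r n" and t: "0 < t" "t < 1"
  shows "block_prob q n x * real (card {B \<in> blocks n m. ml_decoder r q m n B (encode r m n B x) \<noteq> x})
     \<le> real (card (blocks n m)) * (block_prob q n x powr (1 - t) * 2 powr (- t * m))"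
proof -
  let ?F = "{B \<in> blocks n m. ml_decoder r q m n B (encode r m n B x) \<noteq> x}"
  let ?N = "real (card (blocks n m))"
  let ?W = "{x' \<in> blocks r n. x' \<noteq> x \<and> block_prob q n x \<le> block_prob q n x'}"
  let ?px = "block_prob q n x"
  show ?thesis
  proof (cases "?px = 0")
    case False
    then have px: "0 < ?px" using block_prob_nonneg[OF jd, of n x] by simp
    have "?px * real (card ?F) * 2 ^ m \<le> ?px * (real (card ?W) * ?N)"
      using card_ml_failures_collisions[OF x, of m q] px by (simp add: mult.assoc)
    also have "\<dots> = (real (card ?W) * ?px) * ?N" by simp
    also have "\<dots> \<le> ?N"
      using card_more_likely_blocks[OF jd, of n x] px by (intro mult_left_le_one_le) auto
    finally have "?px * real (card ?F) \<le> ?N * (1 / 2 ^ m)" by (simp add: field_simps)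
    moreover have "?px * real (card ?F) \<le> ?N * ?px"
      using px by (simp add: card_mono mult.commute)
    ultimately have "?px * real (card ?F) \<le> ?N * min ?px (1 / 2 ^ m)" by (simp add: min_def)
    also have "\<dots> \<le> ?N * (?px powr (1 - t) * (1 / 2 ^ m) powr t)"
      using px t by (intro mult_left_mono min_le_geometric_mean) auto
    also have "(1 / 2 ^ m) powr t = (2::real) powr (- t * m)"
      by (simp add: powr_realpow[symmetric] powr_powr powr_minus_divide[symmetric] powr_divide mult.commute)
    finally show ?thesis .
  qed simp
qed

lemma average_ml_error:
  assumes jd: "is_joint_dist r q" and t: "0 < t" "t < 1"
  shows "(\<Sum>B\<in>blocks n m. err_prob r q m n B (ml_decoder r q m n B))
     \<le> real (card (blocks n m)) * (2 powr (- t * m) * power_sum r q (1 - t) ^ n)"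
proof -
  let ?N = "real (card (blocks n m))"
  have "(\<Sum>B\<in>blocks n m. err_prob r q m n B (ml_decoder r q m n B))
     = (\<Sum>x\<in>blocks r n. \<Sum>B\<in>blocks n m.
          if ml_decoder r q m n B (encode r m n B x) \<noteq> x then block_prob q n x else 0)"
    unfolding err_prob_def by (rule sum.swap)
  also have "\<dots> = (\<Sum>x\<in>blocks r n. block_prob q n x
          * real (card {B \<in> blocks n m. ml_decoder r q m n B (encode r m n B x) \<noteq> x}))"
    by (intro sum.cong refl) (simp add: sum.inter_filter[symmetric] mult.commute)
  also have "\<dots> \<le> (\<Sum>x\<in>blocks r n. ?N * (block_prob q n x powr (1 - t) * 2 powr (- t * m)))"
    by (intro sum_mono card_ml_failures[OF jd _ t])
  also have "\<dots> = ?N * 2 powr (- t * m) * (\<Sum>x\<in>blocks r n. block_prob q n x powr (1 - t))"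
    by (simp add: sum_distrib_left mult_ac)
  also have "(\<Sum>x\<in>blocks r n. block_prob q n x powr (1 - t)) = power_sum r q (1 - t) ^ n"
    unfolding power_sum_def by (rule sum_block_prob_powr)
  finally show ?thesis by (simp add: mult_ac)
qed

abbreviation code_len :: "nat \<Rightarrow> real \<Rightarrow> nat" where
  "code_len n R \<equiv> nat \<lceil>real n * R\<rceil>"

lemma ml_error_exponent:
  assumes jd: "is_joint_dist r q" and R: "joint_entropy r q < R"
  shows "\<exists>\<rho>. 0 \<le> \<rho> \<and> \<rho> < 1 \<and> (\<forall>n.
      (\<Sum>B\<in>blocks n (code_len n R). err_prob r q (code_len n R) n B (ml_decoder r q (code_len n R) n B))
      \<le> real (card (blocks n (code_len n R))) * \<rho> ^ n)"
proof -
  obtain t where t: "0 < t" "t < 1" and lt: "power_sum r q (1 - t) * 2 powr (- t * R) < 1"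
    using achievability_exponent[OF jd R] by blast
  define \<rho> where "\<rho> = power_sum r q (1 - t) * 2 powr (- t * R)"
  have "(\<Sum>B\<in>blocks n (code_len n R). err_prob r q (code_len n R) n B (ml_decoder r q (code_len n R) n B))
      \<le> real (card (blocks n (code_len n R))) * \<rho> ^ n" for n
  proof -
    let ?m = "code_len n R"
    have "real n * R \<le> real ?m" by linarith
    then have "2 powr (- t * ?m) \<le> (2::real) powr (- t * R * n)"
      using t by (intro powr_mono) (auto simp: mult_ac)
    also have "\<dots> = (2 powr (- t * R)) ^ n" by (simp add: powr_power mult_ac)
    finally have rate: "2 powr (- t * ?m) \<le> (2 powr (- t * R)) ^ n" .
    have "(\<Sum>B\<in>blocks n ?m. err_prob r q ?m n B (ml_decoder r q ?m n B))
       \<le> real (card (blocks n ?m)) * (2 powr (- t * ?m) * power_sum r q (1 - t) ^ n)"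
      by (rule average_ml_error[OF jd t])
    also have "\<dots> \<le> real (card (blocks n ?m)) * ((2 powr (- t * R)) ^ n * power_sum r q (1 - t) ^ n)"
      using rate power_sum_nonneg by (intro mult_left_mono mult_right_mono) auto
    also have "\<dots> = real (card (blocks n ?m)) * \<rho> ^ n"
      unfolding \<rho>_def by (simp add: power_mult_distrib mult_ac)
    finally show ?thesis .
  qed
  moreover have "0 \<le> \<rho>" unfolding \<rho>_def using power_sum_nonneg by simp
  ultimately show ?thesis using lt unfolding \<rho>_def by blast
qed

lemma exists_le_average:
  fixes f :: "'a \<Rightarrow> real"
  assumes "finite A" "A \<noteq> {}" "(\<Sum>a\<in>A. f a) \<le> real (card A) * c"
  shows "\<exists>a\<in>A. f a \<le> c"
proof (rule ccontr)
  assume "\<not> (\<exists>a\<in>A. f a \<le> c)"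
  then have "(\<Sum>a\<in>A. c) < (\<Sum>a\<in>A. f a)" using assms by (intro sum_strict_mono) auto
  then show False using assms by simp
qed

text \<open>The averaging argument: if for every matrix some decoder errs with probability at
  most a sum of terms E i, each of whose averages over all matrices decays geometrically,
  then for all large n some matrix is good, so the rate is achievable.\<close>

lemma achievable_by_averaging:
  fixes E :: "'i \<Rightarrow> nat \<Rightarrow> (nat \<Rightarrow> tuple) \<Rightarrow> real"
  assumes R0: "0 \<le> R" and \<rho>: "\<And>i. i \<in> I \<Longrightarrow> 0 \<le> \<rho> i \<and> \<rho> i < 1"
    and decoder: "\<And>n B. \<exists>g. err_prob r p (code_len n R) n B g \<le> (\<Sum>i\<in>I. E i n B)"
    and average: "\<And>i n. i \<in> I \<Longrightarrow>
      (\<Sum>B\<in>blocks n (code_len n R). E i n B) \<le> real (card (blocks n (code_len n R))) * \<rho> i ^ n"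
  shows "achievable_sc r p R"
  unfolding achievable_sc_def
proof (intro conjI allI impI R0)
  fix \<epsilon> :: real assume "0 < \<epsilon>"
  have "(\<lambda>n. \<Sum>i\<in>I. \<rho> i ^ n) \<longlonglongrightarrow> 0"
    using \<rho> by (intro tendsto_null_sum LIMSEQ_power_zero) auto
  then have "eventually (\<lambda>n. (\<Sum>i\<in>I. \<rho> i ^ n) < \<epsilon>) sequentially"
    using \<open>0 < \<epsilon>\<close> by (rule order_tendstoD)
  then obtain N where N: "\<And>n. n \<ge> N \<Longrightarrow> (\<Sum>i\<in>I. \<rho> i ^ n) < \<epsilon>"
    unfolding eventually_sequentially by blast
  show "\<exists>N. \<forall>n\<ge>N. \<exists>B g. err_prob r p (code_len n R) n B g \<le> \<epsilon>"
  proof (intro exI[of _ N] allI impI)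
    fix n assume "N \<le> n"
    let ?M = "blocks n (code_len n R)"
    have "(\<Sum>B\<in>?M. \<Sum>i\<in>I. E i n B) = (\<Sum>i\<in>I. \<Sum>B\<in>?M. E i n B)" by (rule sum.swap)
    also have "\<dots> \<le> (\<Sum>i\<in>I. real (card ?M) * \<rho> i ^ n)" by (intro sum_mono average)
    also have "\<dots> = real (card ?M) * (\<Sum>i\<in>I. \<rho> i ^ n)" by (simp add: sum_distrib_left)
    finally obtain B where B: "(\<Sum>i\<in>I. E i n B) \<le> (\<Sum>i\<in>I. \<rho> i ^ n)"
      using exists_le_average[OF finite_blocks blocks_nonempty] by blast
    obtain g where "err_prob r p (code_len n R) n B g \<le> (\<Sum>i\<in>I. E i n B)"
      using decoder by blast
    then have "err_prob r p (code_len n R) n B g \<le> \<epsilon>" using B N[OF \<open>N \<le> n\<close>] by linarith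
    then show "\<exists>B g. err_prob r p (code_len n R) n B g \<le> \<epsilon>" by blast
  qed
qed

lemma achievable_above_joint_entropy:
  assumes jd: "is_joint_dist r p" and R: "joint_entropy r p < R"
  shows "achievable_sc r p R"
proof -
  obtain \<rho> where \<rho>: "0 \<le> \<rho>" "\<rho> < 1" and avg: "\<And>n.
      (\<Sum>B\<in>blocks n (code_len n R). err_prob r p (code_len n R) n B (ml_decoder r p (code_len n R) n B))
      \<le> real (card (blocks n (code_len n R))) * \<rho> ^ n"
    using ml_error_exponent[OF jd R] by blast
  show ?thesis
  proof (rule achievable_by_averaging[where I = "{()}" and \<rho> = "\<lambda>_. \<rho>"
        and E = "\<lambda>_ n B. err_prob r p (code_len n R) n B (ml_decoder r p (code_len n R) n B)"])
    show "0 \<le> R" using joint_entropy_nonneg[OF jd] R by simp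
  qed (use \<rho> avg in auto)
qed

lemma restr_tuples: "v \<in> tuples r \<Longrightarrow> restr S v \<in> tuples r"
  by (simp add: tuples_def restr_def)

lemma restr_zero [simp]: "restr S (\<lambda>_. 0) = (\<lambda>_. 0)"
  by (simp add: restr_def fun_eq_iff)

lemma restr_block: "x \<in> blocks r n \<Longrightarrow> (\<lambda>t. restr S (x t)) \<in> blocks r n"
  by (auto simp: blocks_def restr_tuples)

lemma marg_is_joint_dist:
  assumes jd: "is_joint_dist r p"
  shows "is_joint_dist r (marg r p S)"
proof -
  have "0 \<le> marg r p S u" for u
    unfolding marg_def using jd by (intro sum_nonneg) (auto simp: is_joint_dist_def)
  moreover have "marg r p S u = 0" if "u \<notin> tuples r" for u
  proof -
    have no_preimage: "{v \<in> tuples r. restr S v = u} = {}" using that restr_tuples by blast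
    show ?thesis unfolding marg_def no_preimage by simp
  qed
  moreover have "(\<Sum>u\<in>tuples r. marg r p S u) = (\<Sum>v\<in>tuples r. p v)"
    unfolding marg_def by (rule sum.group) (auto intro: restr_tuples)
  ultimately show ?thesis using jd by (simp add: is_joint_dist_def)
qed

lemma sum_block_prob_fiber:
  assumes w: "w \<in> blocks r n"
  shows "(\<Sum>x\<in>{x \<in> blocks r n. (\<lambda>t. restr S (x t)) = w}. block_prob p n x)
       = block_prob (marg r p S) n w"
proof -
  let ?A = "\<lambda>t. {v \<in> tuples r. restr S v = w t}"
  have "{x \<in> blocks r n. (\<lambda>t. restr S (x t)) = w} = {x \<in> blocks r n. \<forall>t<n. x t \<in> ?A t}"
  proof (intro set_eqI iffI)
    fix x assume "x \<in> {x \<in> blocks r n. \<forall>t<n. x t \<in> ?A t}"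
    moreover have "restr S (x t) = w t" if "x \<in> blocks r n" "\<forall>t<n. x t \<in> ?A t" for t
      using that w by (cases "t < n") (auto simp: blocks_def)
    ultimately show "x \<in> {x \<in> blocks r n. (\<lambda>t. restr S (x t)) = w}" by auto
  qed (auto simp: blocks_def)
  then show ?thesis unfolding block_prob_def
    by (simp only:) (subst sum_blocks_prod, auto simp: marg_def)
qed

lemma sum_block_prob_restr:
  "(\<Sum>x\<in>blocks r n. block_prob p n x * h (\<lambda>t. restr S (x t)))
   = (\<Sum>w\<in>blocks r n. block_prob (marg r p S) n w * h w)"
proof -
  have "(\<Sum>x\<in>blocks r n. block_prob p n x * h (\<lambda>t. restr S (x t)))
      = (\<Sum>w\<in>blocks r n. \<Sum>x\<in>{x \<in> blocks r n. (\<lambda>t. restr S (x t)) = w}.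
            block_prob p n x * h (\<lambda>t. restr S (x t)))"
    by (rule sum.group[symmetric]) (auto intro: restr_block)
  also have "\<dots> = (\<Sum>w\<in>blocks r n. \<Sum>x\<in>{x \<in> blocks r n. (\<lambda>t. restr S (x t)) = w}.
            block_prob p n x * h w)"
    by (intro sum.cong refl) auto
  also have "\<dots> = (\<Sum>w\<in>blocks r n. block_prob (marg r p S) n w * h w)"
    by (intro sum.cong refl) (simp add: sum_distrib_right[symmetric] sum_block_prob_fiber)
  finally show ?thesis .
qed

lemma entropy_eq_joint_entropy_marg: "entropy r p {i} = joint_entropy r (marg r p {i})"
proof -
  let ?f = "\<lambda>u. if marg r p {i} u = 0 then 0 else marg r p {i} u * log 2 (marg r p {i} u)"
  have "(\<Sum>u\<in>restr {i} ` tuples r. ?f u) = (\<Sum>u\<in>tuples r. ?f u)"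
  proof (rule sum.mono_neutral_left)
    show "restr {i} ` tuples r \<subseteq> tuples r" using restr_tuples by blast
    show "\<forall>u\<in>tuples r - restr {i} ` tuples r. ?f u = 0"
    proof
      fix u assume "u \<in> tuples r - restr {i} ` tuples r"
      then have no_preimage: "{v \<in> tuples r. restr {i} v = u} = {}" by blast
      show "?f u = 0" unfolding marg_def no_preimage by simp
    qed
  qed simp
  then show ?thesis unfolding entropy_def joint_entropy_def by simp
qed

definition source_syndrome :: "nat \<Rightarrow> (nat \<Rightarrow> nat \<Rightarrow> bit) \<Rightarrow> (nat \<Rightarrow> nat \<Rightarrow> bit)" where
  "source_syndrome i y = (\<lambda>i' k. if i' = i then y i' k else 0)"

definition separate_decoder :: "nat \<Rightarrow> (tuple \<Rightarrow> real) \<Rightarrow> nat \<Rightarrow> nat \<Rightarrow> (nat \<Rightarrow> nat \<Rightarrow> bit)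
    \<Rightarrow> (nat \<Rightarrow> nat \<Rightarrow> bit) \<Rightarrow> (nat \<Rightarrow> tuple)" where
  "separate_decoder r p m n B y = (\<lambda>j i. if i < r
      then ml_decoder r (marg r p {i}) m n B (source_syndrome i y) j i else 0)"

lemma encode_restr_single:
  "i < r \<Longrightarrow> encode r m n B (\<lambda>t. restr {i} (x t)) = source_syndrome i (encode r m n B x)"
  by (intro ext) (simp add: encode_def source_syndrome_def restr_def)

lemma separate_decoder_correct:
  assumes x: "x \<in> blocks r n"
    and ok: "\<And>i. i < r \<Longrightarrow> ml_decoder r (marg r p {i}) m n B
                 (encode r m n B (\<lambda>t. restr {i} (x t))) = (\<lambda>t. restr {i} (x t))"
  shows "separate_decoder r p m n B (encode r m n B x) = x"
proof (intro ext)
  fix j i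
  show "separate_decoder r p m n B (encode r m n B x) j i = x j i"
  proof (cases "i < r")
    case True
    then have "separate_decoder r p m n B (encode r m n B x) j i
        = ml_decoder r (marg r p {i}) m n B (encode r m n B (\<lambda>t. restr {i} (x t))) j i"
      by (simp add: separate_decoder_def encode_restr_single)
    also have "\<dots> = x j i" using ok[OF True] by (simp add: restr_def)
    finally show ?thesis .
  next
    case False
    then show ?thesis using x by (cases "j < n") (auto simp: separate_decoder_def blocks_def tuples_def)
  qed
qed

lemma separate_decoder_error:
  assumes jd: "is_joint_dist r p"
  shows "err_prob r p m n B (separate_decoder r p m n B)
     \<le> (\<Sum>i<r. err_prob r (marg r p {i}) m n B (ml_decoder r (marg r p {i}) m n B))"
proof -
  define fails where "fails i w = (if ml_decoder r (marg r p {i}) m n B (encode r m n B w) \<noteq> w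
      then 1 else (0::real))" for i w
  have pointwise: "(if separate_decoder r p m n B (encode r m n B x) \<noteq> x then block_prob p n x else 0)
        \<le> (\<Sum>i<r. block_prob p n x * fails i (\<lambda>t. restr {i} (x t)))" if x: "x \<in> blocks r n" for x
  proof (cases "separate_decoder r p m n B (encode r m n B x) = x")
    case False
    then obtain i where i: "i < r" and "ml_decoder r (marg r p {i}) m n B
        (encode r m n B (\<lambda>t. restr {i} (x t))) \<noteq> (\<lambda>t. restr {i} (x t))"
      using separate_decoder_correct[OF x] by blast
    then have "block_prob p n x = block_prob p n x * fails i (\<lambda>t. restr {i} (x t))"
      by (simp add: fails_def)
    also have "\<dots> \<le> (\<Sum>i<r. block_prob p n x * fails i (\<lambda>t. restr {i} (x t)))"
      using i block_prob_nonneg[OF jd] by (intro member_le_sum) (auto simp: fails_def)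
    finally show ?thesis using False by simp
  qed (use block_prob_nonneg[OF jd] in \<open>auto intro: sum_nonneg simp: fails_def\<close>)
  have "err_prob r p m n B (separate_decoder r p m n B)
      \<le> (\<Sum>x\<in>blocks r n. \<Sum>i<r. block_prob p n x * fails i (\<lambda>t. restr {i} (x t)))"
    unfolding err_prob_def by (intro sum_mono pointwise)
  also have "\<dots> = (\<Sum>i<r. \<Sum>w\<in>blocks r n. block_prob (marg r p {i}) n w * fails i w)"
    by (subst sum.swap) (intro sum.cong refl sum_block_prob_restr)
  also have "\<dots> = (\<Sum>i<r. err_prob r (marg r p {i}) m n B (ml_decoder r (marg r p {i}) m n B))"
    unfolding err_prob_def fails_def by (intro sum.cong refl) auto
  finally show ?thesis .
qed

lemma achievable_above_max_entropy:
  assumes jd: "is_joint_dist r p" and R0: "0 \<le> R"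
    and R: "\<And>i. i < r \<Longrightarrow> entropy r p {i} < R"
  shows "achievable_sc r p R"
proof -
  let ?E = "\<lambda>i n B. err_prob r (marg r p {i}) (code_len n R) n B
                      (ml_decoder r (marg r p {i}) (code_len n R) n B)"
  have "\<forall>i\<in>{..<r}. \<exists>\<rho>. 0 \<le> \<rho> \<and> \<rho> < 1 \<and>
      (\<forall>n. (\<Sum>B\<in>blocks n (code_len n R). ?E i n B) \<le> real (card (blocks n (code_len n R))) * \<rho> ^ n)"
    using ml_error_exponent[OF marg_is_joint_dist[OF jd]] R
    by (simp add: entropy_eq_joint_entropy_marg)
  then obtain \<rho> where \<rho>: "\<forall>i\<in>{..<r}. 0 \<le> \<rho> i \<and> \<rho> i < 1 \<and>
      (\<forall>n. (\<Sum>B\<in>blocks n (code_len n R). ?E i n B) \<le> real (card (blocks n (code_len n R))) * \<rho> i ^ n)"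
    by (rule bchoice[THEN exE]) blast
  show ?thesis
  proof (rule achievable_by_averaging[where I = "{..<r}" and \<rho> = \<rho> and E = ?E])
    show "\<exists>g. err_prob r p (code_len n R) n B g \<le> (\<Sum>i<r. ?E i n B)" for n B
      using separate_decoder_error[OF jd] by blast
  qed (use R0 \<rho> in auto)
qed

lemma R_SW_sc_le:
  assumes "\<And>R. x < R \<Longrightarrow> achievable_sc r p R"
  shows "R_SW_sc r p \<le> x"
proof (rule ccontr)
  let ?A = "{R. achievable_sc r p R}"
  assume "\<not> R_SW_sc r p \<le> x"
  then have lt: "x < Inf ?A" by (simp add: R_SW_sc_def)
  have bdd: "bdd_below ?A" by (rule bdd_belowI[of _ 0]) (auto simp: achievable_sc_def)
  have "(x + Inf ?A) / 2 \<in> ?A" using assms lt by simp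
  then have "Inf ?A \<le> (x + Inf ?A) / 2" by (rule cInf_lower[OF _ bdd])
  then show False using lt by simp
qed

lemma R_SW_sc_ge:
  assumes "achievable_sc r p R1" and "\<And>R. achievable_sc r p R \<Longrightarrow> x \<le> R"
  shows "x \<le> R_SW_sc r p"
  unfolding R_SW_sc_def using assms by (intro cInf_greatest) auto

text \<open>Conditioning on the empty set of sources changes nothing.\<close>

lemma cond_entropy_all: "is_joint_dist r p \<Longrightarrow> cond_entropy r p {..<r} = joint_entropy r p"
proof -
  assume jd: "is_joint_dist r p"
  have all: "{v \<in> tuples r. restr {} v = restr {} w} = tuples r" for w
    by (auto simp: restr_def)
  have marg_empty: "marg r p {} (restr {} w) = 1" for w
    unfolding marg_def all using jd by (simp add: is_joint_dist_def)
  show ?thesis unfolding cond_entropy_def joint_entropy_def Diff_cancel marg_empty div_by_1 ..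
qed

lemma sw_constraint_all_sources:
  assumes jd: "is_joint_dist r p" and r: "1 \<le> r"
    and R: "\<forall>S. S \<subseteq> {..<r} \<and> S \<noteq> {} \<longrightarrow> cond_entropy r p S \<le> real (card S) * R"
  shows "joint_entropy r p \<le> real r * R"
proof -
  have "0 \<in> {..<r}" using r by simp
  then have "cond_entropy r p {..<r} \<le> real (card {..<r}) * R" using R by blast
  then show ?thesis using cond_entropy_all[OF jd] by simp
qed

text \<open>Hence r R_SW \<ge> H(V_1, ..., V_r); the admissible set is nonempty since a large R
  dominates every conditional entropy.\<close>

lemma joint_entropy_le_R_SW:
  assumes jd: "is_joint_dist r p" and r: "1 \<le> r"
  shows "joint_entropy r p \<le> real r * R_SW r p"
proof -
  let ?A = "{R. \<forall>S. S \<subseteq> {..<r} \<and> S \<noteq> {} \<longrightarrow> cond_entropy r p S \<le> real (card S) * R}"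
  define R0 where "R0 = (\<Sum>S\<in>Pow {..<r}. \<bar>cond_entropy r p S\<bar>)"
  have "R0 \<in> ?A"
  proof (intro CollectI allI impI)
    fix S assume S: "S \<subseteq> {..<r} \<and> S \<noteq> {}"
    then have "finite S" and "S \<noteq> {}" using finite_subset by auto
    then have "1 \<le> card S" by (simp add: Suc_le_eq card_gt_0_iff)
    moreover have "0 \<le> R0" unfolding R0_def by (intro sum_nonneg) auto
    ultimately have "R0 \<le> real (card S) * R0"
      using mult_right_mono[of 1 "real (card S)" R0] by simp
    moreover have "\<bar>cond_entropy r p S\<bar> \<le> R0" unfolding R0_def
      using S by (intro member_le_sum) auto
    ultimately show "cond_entropy r p S \<le> real (card S) * R0" by linarith
  qed
  then have "?A \<noteq> {}" by blast
  then have "joint_entropy r p / real r \<le> Inf ?A"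
  proof (rule cInf_greatest)
    fix R assume "R \<in> ?A"
    then show "joint_entropy r p / real r \<le> R"
      using sw_constraint_all_sources[OF jd r] r by (simp add: divide_le_eq mult.commute)
  qed
  then show ?thesis using r unfolding R_SW_def by (simp add: divide_le_eq mult.commute)
qed

theorem R_SW_sc_upper_bound:
  assumes r: "1 \<le> r" and jd: "is_joint_dist r p"
  shows "R_SW_sc r p \<le> min (real r * R_SW r p) (Max ((\<lambda>i. entropy r p {i}) ` {..<r}))"
proof -
  let ?M = "Max ((\<lambda>i. entropy r p {i}) ` {..<r})"
  have le_max: "entropy r p {i} \<le> ?M" if "i < r" for i using that by (intro Max_ge) auto
  have "0 \<le> entropy r p {0}"
    using joint_entropy_nonneg[OF marg_is_joint_dist[OF jd]] by (simp add: entropy_eq_joint_entropy_marg)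
  moreover have "entropy r p {0} \<le> ?M" using r by (intro le_max) simp
  ultimately have "0 \<le> ?M" by linarith
  then have "R_SW_sc r p \<le> ?M"
    using le_max by (intro R_SW_sc_le achievable_above_max_entropy[OF jd])
      (fastforce, meson order_le_less_trans)
  moreover have "R_SW_sc r p \<le> joint_entropy r p"
    by (intro R_SW_sc_le achievable_above_joint_entropy[OF jd])
  ultimately show ?thesis using joint_entropy_le_R_SW[OF jd r] by simp
qed

section \<open>Identical sources\<close>

definition identical_sources :: "nat \<Rightarrow> (tuple \<Rightarrow> real) \<Rightarrow> bool" where
  "identical_sources r p \<longleftrightarrow> (\<forall>v. p v \<noteq> 0 \<longrightarrow> (\<forall>i<r. v i = v 0))"

lemma identical_sourcesD: "identical_sources r p \<Longrightarrow> p v \<noteq> 0 \<Longrightarrow> i < r \<Longrightarrow> v i = v 0"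
  unfolding identical_sources_def by blast

lemma identical_sources_eq:
  assumes jd: "is_joint_dist r p" and id: "identical_sources r p"
    and pv: "p v \<noteq> 0" and pv': "p v' \<noteq> 0" and j: "j < r" and eq: "v j = v' j"
  shows "v = v'"
proof
  fix i
  have "v \<in> tuples r" "v' \<in> tuples r" using jd pv pv' unfolding is_joint_dist_def by auto
  show "v i = v' i"
  proof (cases "i < r")
    case True
    have "v i = v 0" "v j = v 0" "v' i = v' 0" "v' j = v' 0"
      using identical_sourcesD[OF id] pv pv' True j by blast+
    then show ?thesis using eq by simp
  next
    case False
    then show ?thesis using \<open>v \<in> tuples r\<close> \<open>v' \<in> tuples r\<close> by (simp add: tuples_def)
  qed
qed

lemma sum_single_support:
  assumes "finite F" "a \<in> F" "\<And>v. v \<in> F \<Longrightarrow> v \<noteq> a \<Longrightarrow> f v = (0::real)"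
  shows "sum f F = f a"
  using assms by (simp add: sum.remove sum.neutral)

lemma sum_at_most_one_nonzero:
  fixes G :: "real \<Rightarrow> real"
  assumes F: "finite F" and G0: "G 0 = 0"
    and unique: "\<And>v v'. v \<in> F \<Longrightarrow> v' \<in> F \<Longrightarrow> p v \<noteq> 0 \<Longrightarrow> p v' \<noteq> 0 \<Longrightarrow> v = v'"
  shows "G (sum p F) = (\<Sum>v\<in>F. G (p v))"
proof (cases "\<exists>a\<in>F. p a \<noteq> 0")
  case True
  then obtain a where a: "a \<in> F" "p a \<noteq> 0" by blast
  have zero: "\<And>v. v \<in> F \<Longrightarrow> v \<noteq> a \<Longrightarrow> p v = 0" using unique a by blast
  have "sum p F = p a" by (rule sum_single_support[OF F a(1) zero])
  moreover have "(\<Sum>v\<in>F. G (p v)) = G (p a)"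
    by (rule sum_single_support[OF F a(1)]) (simp add: zero G0)
  ultimately show ?thesis by simp
qed (use G0 in simp)

lemma joint_entropy_marg_first:
  assumes jd: "is_joint_dist r p" and id: "identical_sources r p" and r: "1 \<le> r"
  shows "joint_entropy r (marg r p {0}) = joint_entropy r p"
proof -
  define G where "G y = (if y = 0 then 0 else y * log 2 y)" for y :: real
  have "(\<Sum>u\<in>tuples r. G (marg r p {0} u))
      = (\<Sum>u\<in>tuples r. \<Sum>v\<in>{v \<in> tuples r. restr {0} v = u}. G (p v))"
    unfolding marg_def
  proof (intro sum.cong refl sum_at_most_one_nonzero)
    fix u v v' assume v: "v \<in> {v \<in> tuples r. restr {0} v = u}"
      and v': "v' \<in> {v \<in> tuples r. restr {0} v = u}" and pv: "p v \<noteq> 0" and pv': "p v' \<noteq> 0"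
    have "restr {0} v 0 = restr {0} v' 0" using v v' by simp
    then have "v 0 = v' 0" by (simp add: restr_def)
    then show "v = v'" using identical_sources_eq[OF jd id pv pv', of 0] r by simp
  qed (simp_all add: G_def)
  also have "\<dots> = (\<Sum>v\<in>tuples r. G (p v))"
    by (rule sum.group) (auto intro: restr_tuples)
  finally show ?thesis unfolding joint_entropy_def G_def by simp
qed

lemma cond_entropy_proper_subset:
  assumes jd: "is_joint_dist r p" and id: "identical_sources r p" and j: "j < r" "j \<notin> S"
  shows "cond_entropy r p S = 0"
proof -
  let ?C = "{..<r} - S"
  have "(if p v = 0 then 0 else p v * log 2 (p v / marg r p ?C (restr ?C v))) = 0"
    if v: "v \<in> tuples r" for v
  proof (cases "p v = 0")
    case False
    have "marg r p ?C (restr ?C v) = p v"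
      unfolding marg_def
    proof (rule sum_single_support)
      fix v' assume v': "v' \<in> {v' \<in> tuples r. restr ?C v' = restr ?C v}" and "v' \<noteq> v"
      have "v' j = v j" using fun_cong[of _ _ j, OF conjunct2[OF v'[simplified]]] j
        by (simp add: restr_def)
      then show "p v' = 0"
        using identical_sources_eq[OF jd id _ False j(1)] \<open>v' \<noteq> v\<close> by blast
    qed (use v in simp_all)
    then show ?thesis using False by simp
  qed simp
  then show ?thesis unfolding cond_entropy_def by simp
qed

lemma R_SW_identical:
  assumes jd: "is_joint_dist r p" and id: "identical_sources r p" and r: "1 \<le> r"
    and H: "0 < joint_entropy r p"
  shows "R_SW r p = joint_entropy r p / real r"
proof -
  let ?A = "{R. \<forall>S. S \<subseteq> {..<r} \<and> S \<noteq> {} \<longrightarrow> cond_entropy r p S \<le> real (card S) * R}"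
  have "?A = {joint_entropy r p / real r..}"
  proof (intro set_eqI iffI)
    fix R assume "R \<in> ?A"
    then show "R \<in> {joint_entropy r p / real r..}"
      using sw_constraint_all_sources[OF jd r] r by (simp add: divide_le_eq mult.commute)
  next
    fix R assume "R \<in> {joint_entropy r p / real r..}"
    then have R: "joint_entropy r p \<le> real r * R" using r by (simp add: divide_le_eq mult.commute)
    then have "0 < real r * R" using H by linarith
    then have R0: "0 \<le> R" by (simp add: zero_less_mult_iff)
    show "R \<in> ?A"
    proof (intro CollectI allI impI)
      fix S assume S: "S \<subseteq> {..<r} \<and> S \<noteq> {}"
      show "cond_entropy r p S \<le> real (card S) * R"
      proof (cases "S = {..<r}")
        case True then show ?thesis using R cond_entropy_all[OF jd] by simp
      next
        case False
        then obtain j where "j < r" "j \<notin> S" using S by blast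
        then show ?thesis using cond_entropy_proper_subset[OF jd id] R0 by simp
      qed
    qed
  qed
  then show ?thesis unfolding R_SW_def by simp
qed

lemma encode_identical_block:
  assumes same: "\<And>t i. t < n \<Longrightarrow> i < r \<Longrightarrow> x t i = x t 0"
  shows "encode r m n B x = (\<lambda>i k. if i < r \<and> k < m then (\<Sum>j<n. B k j * x j 0) else 0)"
proof (intro ext)
  fix i k
  show "encode r m n B x i k = (if i < r \<and> k < m then (\<Sum>j<n. B k j * x j 0) else 0)"
  proof (cases "i < r \<and> k < m")
    case True
    have "(\<Sum>j<n. B k j * x j i) = (\<Sum>j<n. B k j * x j 0)"
    proof (rule sum.cong[OF refl])
      fix j assume "j \<in> {..<n}"
      then show "B k j * x j i = B k j * x j 0" using same[of j i] True by simp
    qed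
    then show ?thesis using True by (simp add: encode_def)
  next
    case False
    then show ?thesis unfolding encode_def using False by (simp only: if_False)
  qed
qed

text \<open>Hence, for identical sources, a decoder's correct outputs on the support of the
  law range over at most 2^m blocks, one per possible syndrome.\<close>

lemma card_decoded_support:
  assumes id: "identical_sources r p"
  shows "card {x \<in> blocks r n. g (encode r m n B x) = x \<and> block_prob p n x \<noteq> 0} \<le> 2 ^ m"
proof -
  let ?C = "{x \<in> blocks r n. g (encode r m n B x) = x \<and> block_prob p n x \<noteq> 0}"
  let ?replicate = "\<lambda>s. (\<lambda>i k. if i < r \<and> k < m then s k else (0::bit))"
  have "?C \<subseteq> g ` ?replicate ` tuples m"
  proof
    fix x assume x: "x \<in> ?C"
    have same: "x t i = x t 0" if "t < n" "i < r" for t i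
    proof -
      have "p (x t) \<noteq> 0" using x \<open>t < n\<close> block_prob_nonzero_factor[of p n x t] by simp
      then show ?thesis using \<open>i < r\<close> by (rule identical_sourcesD[OF id])
    qed
    define s where "s = (\<lambda>k. if k < m then (\<Sum>j<n. B k j * x j 0) else 0)"
    have "encode r m n B x = (\<lambda>i k. if i < r \<and> k < m then (\<Sum>j<n. B k j * x j 0) else 0)"
      using same by (rule encode_identical_block)
    also have "\<dots> = ?replicate s" unfolding s_def by (intro ext) (simp cong: if_cong)
    finally have "x = g (?replicate s)" using x by simp
    moreover have "s \<in> tuples m" by (simp add: s_def tuples_def)
    ultimately show "x \<in> g ` ?replicate ` tuples m"
      by (intro image_eqI[of x g] rev_image_eqI[of s]) simp_all
  qed
  then have "card ?C \<le> card (g ` ?replicate ` tuples m)" by (rule card_mono[rotated]) simp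
  also have "\<dots> \<le> card (?replicate ` tuples m)" by (rule card_image_le) simp
  also have "\<dots> \<le> card (tuples m)" by (rule card_image_le) simp
  also have "\<dots> \<le> 2 ^ m" by (rule card_tuples_le)
  finally show ?thesis .
qed

lemma le_threshold_plus_tail:
  fixes P a t :: real
  assumes P: "0 \<le> P" and a: "0 < a" and t: "0 < t"
  shows "P \<le> a + a powr (- t) * P powr (1 + t)"
proof (cases "P \<le> a")
  case True
  then show ?thesis by (simp add: add_increasing2)
next
  case False
  then have Pp: "0 < P" and "1 \<le> P / a" using a by auto
  then have "1 \<le> (P / a) powr t" using t by (simp add: ge_one_powr_ge_zero)
  then have "P \<le> P * (P / a) powr t" using Pp by simp
  also have "P * (P / a) powr t = a powr (- t) * P powr (1 + t)"
    using Pp a by (simp add: powr_divide powr_add powr_minus_divide)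
  finally show ?thesis using a by simp
qed

lemma success_prob_bound:
  assumes jd: "is_joint_dist r p" and id: "identical_sources r p" and t: "0 < t" and R0: "0 \<le> R"
  shows "1 - err_prob r p (code_len n R) n B g
    \<le> 2 * (2 powr (R - \<tau>)) ^ n + (power_sum r p (1 + t) * 2 powr (t * \<tau>)) ^ n"
proof -
  define m where "m = code_len n R"
  let ?C = "{x \<in> blocks r n. g (encode r m n B x) = x \<and> block_prob p n x \<noteq> 0}"
  define a where "a = (2::real) powr (- (real n * \<tau>))"
  have a0: "0 < a" by (simp add: a_def)
  have "err_prob r p m n B g
      + (\<Sum>x\<in>blocks r n. if g (encode r m n B x) = x \<and> block_prob p n x \<noteq> 0 then block_prob p n x else 0)
      = (\<Sum>x\<in>blocks r n. block_prob p n x)"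
    unfolding err_prob_def sum.distrib[symmetric] by (intro sum.cong refl) auto
  then have "1 - err_prob r p m n B g = (\<Sum>x\<in>?C. block_prob p n x)"
    using sum_block_prob[OF jd] by (simp add: sum.inter_filter)
  also have "\<dots> \<le> (\<Sum>x\<in>?C. a + a powr (- t) * block_prob p n x powr (1 + t))"
    by (intro sum_mono le_threshold_plus_tail block_prob_nonneg[OF jd] a0 t)
  also have "\<dots> = real (card ?C) * a + a powr (- t) * (\<Sum>x\<in>?C. block_prob p n x powr (1 + t))"
    by (simp add: sum.distrib sum_distrib_left)
  also have "\<dots> \<le> 2 ^ m * a + a powr (- t) * (\<Sum>x\<in>blocks r n. block_prob p n x powr (1 + t))"
  proof (intro add_mono mult_right_mono mult_left_mono sum_mono2)
    show "real (card ?C) \<le> 2 ^ m"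
      using card_decoded_support[OF id, where g = g and m = m and n = n and B = B] by (simp flip: of_nat_le_iff)
  qed (use a0 in auto)
  also have "(\<Sum>x\<in>blocks r n. block_prob p n x powr (1 + t)) = power_sum r p (1 + t) ^ n"
    unfolding power_sum_def by (rule sum_block_prob_powr)
  also have "2 ^ m * a \<le> 2 * (2 powr (R - \<tau>)) ^ n"
  proof -
    have "real m = real_of_int \<lceil>real n * R\<rceil>" unfolding m_def using R0 by simp
    then have "real m \<le> real n * R + 1" by linarith
    then have "2 ^ m * a \<le> 2 powr (1 + real n * (R - \<tau>))"
      by (simp add: a_def powr_realpow[symmetric] powr_add[symmetric] algebra_simps)
    also have "\<dots> = 2 * (2 powr (R - \<tau>)) ^ n"
      by (simp add: powr_add powr_power mult.commute)
    finally show ?thesis .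
  qed
  also have "a powr (- t) * power_sum r p (1 + t) ^ n = (power_sum r p (1 + t) * 2 powr (t * \<tau>)) ^ n"
    by (simp add: a_def powr_powr powr_power power_mult_distrib mult_ac)
  finally show ?thesis unfolding m_def by simp
qed

text \<open>Converse: for identical sources no rate below the joint entropy is achievable,
  since the success probability bound above tends to 0 for R < \<tau> < H.\<close>

lemma converse_identical:
  assumes jd: "is_joint_dist r p" and id: "identical_sources r p" and ach: "achievable_sc r p R"
  shows "joint_entropy r p \<le> R"
proof (rule ccontr)
  assume "\<not> joint_entropy r p \<le> R"
  define \<tau> where "\<tau> = (R + joint_entropy r p) / 2"
  have \<tau>: "R < \<tau>" "\<tau> < joint_entropy r p" using \<open>\<not> joint_entropy r p \<le> R\<close> by (auto simp: \<tau>_def)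
  have R0: "0 \<le> R" using ach by (simp add: achievable_sc_def)
  obtain t where t: "0 < t" and lt: "power_sum r p (1 + t) * 2 powr (t * \<tau>) < 1"
    using converse_exponent[OF jd \<tau>(2)] by blast
  have "2 powr (R - \<tau>) < (2::real) powr 0" using \<tau> by (intro powr_less_mono) auto
  then have "(\<lambda>n. 2 * (2 powr (R - \<tau>)) ^ n + (power_sum r p (1 + t) * 2 powr (t * \<tau>)) ^ n)
      \<longlonglongrightarrow> 2 * 0 + 0"
    using lt power_sum_nonneg
    by (intro tendsto_add tendsto_mult tendsto_const LIMSEQ_power_zero) simp_all
  then have "eventually (\<lambda>n. 2 * (2 powr (R - \<tau>)) ^ n
      + (power_sum r p (1 + t) * 2 powr (t * \<tau>)) ^ n < 1/2) sequentially"
    by (intro order_tendstoD) auto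
  moreover have "eventually (\<lambda>n. \<exists>B g. err_prob r p (code_len n R) n B g \<le> 1/2) sequentially"
    using ach unfolding achievable_sc_def eventually_sequentially by (elim conjE allE[of _ "1/2"]) simp
  ultimately have "eventually (\<lambda>n. 2 * (2 powr (R - \<tau>)) ^ n
      + (power_sum r p (1 + t) * 2 powr (t * \<tau>)) ^ n < 1/2
      \<and> (\<exists>B g. err_prob r p (code_len n R) n B g \<le> 1/2)) sequentially"
    by (rule eventually_conj)
  then obtain n B g where "err_prob r p (code_len n R) n B g \<le> 1/2"
    and "2 * (2 powr (R - \<tau>)) ^ n + (power_sum r p (1 + t) * 2 powr (t * \<tau>)) ^ n < 1/2"
    unfolding eventually_sequentially by blast
  then show False using success_prob_bound[OF jd id t R0, of n B g \<tau>] by linarith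
qed

lemma identical_sources_rates:
  assumes r: "1 \<le> r" and jd: "is_joint_dist r p" and id: "identical_sources r p"
    and H: "entropy r p {0} > 0"
  shows "R_SW r p = entropy r p {0} / real r \<and> R_SW_sc r p = entropy r p {0}"
proof -
  have H0: "entropy r p {0} = joint_entropy r p"
    using entropy_eq_joint_entropy_marg joint_entropy_marg_first[OF jd id r] by simp
  have "R_SW_sc r p \<le> joint_entropy r p"
    by (intro R_SW_sc_le achievable_above_joint_entropy[OF jd])
  moreover have "joint_entropy r p \<le> R_SW_sc r p"
    using achievable_above_joint_entropy[OF jd, of "joint_entropy r p + 1"]
    by (intro R_SW_sc_ge converse_identical[OF jd id]) simp_all
  ultimately show ?thesis using R_SW_identical[OF jd id r] H H0 by simp
qed

definition fair_coin_copies :: "nat \<Rightarrow> tuple \<Rightarrow> real" where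
  "fair_coin_copies r v = (if v \<in> {(\<lambda>_. 0), (\<lambda>i. if i < r then 1 else 0)} then 1/2 else 0)"

lemma fair_coin_copies_props:
  assumes r: "1 \<le> r"
  shows "is_joint_dist r (fair_coin_copies r) \<and> identical_sources r (fair_coin_copies r)
    \<and> entropy r (fair_coin_copies r) {0} = 1"
proof -
  let ?K = "{(\<lambda>_. 0), (\<lambda>i. if i < r then 1 else 0)} :: tuple set"
  have "(\<lambda>_. 0) \<noteq> ((\<lambda>i. if i < r then 1 else 0) :: tuple)"
    using r fun_cong[of "\<lambda>_. 0" "\<lambda>i. if i < r then (1::bit) else 0" 0] by auto
  then have card_K: "card ?K = 2" by simp
  have K: "?K \<subseteq> tuples r" by (auto simp: tuples_def)
  have sum_K: "(\<Sum>v\<in>tuples r. if v \<in> ?K then c else 0) = 2 * c" for c :: real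
  proof -
    have "(\<Sum>v\<in>tuples r. if v \<in> ?K then c else 0) = (\<Sum>v\<in>tuples r \<inter> ?K. c)"
      by (rule sum.inter_restrict[symmetric]) simp
    also have "tuples r \<inter> ?K = ?K" using K by blast
    finally show ?thesis using card_K by simp
  qed
  have jd: "is_joint_dist r (fair_coin_copies r)"
    using K sum_K[of "1/2"] unfolding is_joint_dist_def fair_coin_copies_def by auto
  have id: "identical_sources r (fair_coin_copies r)"
    unfolding identical_sources_def fair_coin_copies_def using r by auto
  have "joint_entropy r (fair_coin_copies r) = - (\<Sum>v\<in>tuples r. if v \<in> ?K then - (1/2) else 0)"
    unfolding joint_entropy_def fair_coin_copies_def
    by (intro arg_cong[where f = uminus] sum.cong refl) (auto simp: log_divide)
  also have "\<dots> = 1" using sum_K[of "- (1/2)"] by simp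
  finally show ?thesis using jd id entropy_eq_joint_entropy_marg joint_entropy_marg_first[OF jd id r]
    by simp
qed

theorem claim2:
  shows "(\<forall>r::nat. 2 \<le> r \<longrightarrow>
            (\<exists>p. is_joint_dist r p \<and> R_SW_sc r p > R_SW r p) \<and>
            (\<forall>p. is_joint_dist r p
                 \<and> (\<forall>v. p v \<noteq> 0 \<longrightarrow> (\<forall>i<r. v i = v 0))
                 \<and> entropy r p {0} > 0
               \<longrightarrow> R_SW r p = entropy r p {0} / real r \<and> R_SW_sc r p = entropy r p {0}))
       \<and> (\<forall>(r::nat) p. 1 \<le> r \<and> is_joint_dist r p \<longrightarrow>
            R_SW_sc r p \<le> min (real r * R_SW r p) (Max ((\<lambda>i. entropy r p {i}) ` {..<r})))"
proof -
  have identical: "R_SW r p = entropy r p {0} / real r \<and> R_SW_sc r p = entropy r p {0}"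
    if "2 \<le> r" and "is_joint_dist r p \<and> (\<forall>v. p v \<noteq> 0 \<longrightarrow> (\<forall>i<r. v i = v 0))
      \<and> entropy r p {0} > 0" for r p
    using identical_sources_rates[of r p] that unfolding identical_sources_def by simp
  have gap: "\<exists>p. is_joint_dist r p \<and> R_SW_sc r p > R_SW r p" if "2 \<le> r" for r
  proof -
    let ?p = "fair_coin_copies r"
    have p: "is_joint_dist r ?p" "identical_sources r ?p" "entropy r ?p {0} = 1"
      using fair_coin_copies_props \<open>2 \<le> r\<close> by simp_all
    then have "R_SW r ?p = 1 / real r" and "R_SW_sc r ?p = 1"
      using identical_sources_rates[of r ?p] \<open>2 \<le> r\<close> by simp_all
    moreover have "1 / real r < 1" using \<open>2 \<le> r\<close> by simp
    ultimately show ?thesis using p(1) by (intro exI[of _ ?p]) simp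
  qed
  show ?thesis using identical gap R_SW_sc_upper_bound by blast
qed

end
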